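(* (1) The topological space $({\rm elh}(\mathbb{C}),\tau_{CC})$ is path connected. (2) For every fixed $f\in{\rm elh}(\mathbb{C})$, the set $R_f({\rm elh}(\mathbb{C}))=\{g\circ f\,:\,g\in{\rm elh}(\mathbb{C})\}$ is a closed subset of $({\rm elh}(\mathbb{C}),\tau_{CC})$.
   Context: ${\rm elh}(\mathbb{C})$ denotes the set of entire functions with nowhere vanishing derivative and derivative $1$ at $0$. $\tau_{CC}$ is the topology of uniform convergence on compact subsets of $\mathbb{C}$. *)

theory Defs
  imports "HOL-Complex_Analysis.Complex_Analysis"
begin

definition elh :: "(complex \<Rightarrow> complex) set" where
  "elh = {f. f holomorphic_on UNIV \<and> (\<forall>z. deriv f z \<noteq> 0) \<and> deriv f 0 = 1}"

definition tau_CC :: "(complex \<Rightarrow> complex) topology" where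
  "tau_CC = topology (\<lambda>U. \<forall>f\<in>U. \<exists>K e. compact K \<and> e > 0 \<and>
      {g. \<forall>z\<in>K. dist (g z) (f z) < e} \<subseteq> U)"

definition R_elh :: "(complex \<Rightarrow> complex) \<Rightarrow> (complex \<Rightarrow> complex) set" where
  "R_elh f = {g \<circ> f | g. g \<in> elh}"

end

theory Submission
  imports Defs
begin

(*
  (1) For f in elh and real t, put H t z = (f (t z) - f 0) / t + t f 0. Writing
  f w - f 0 = w Q w with Q the (entire) difference quotient of f at 0, this is
  H t z = z Q (t z) + t f 0, which is jointly continuous in (t, z), equals the
  identity at t = 0 and f at t = 1, and lies in elh for every t. A jointly
  continuous homotopy is a tau_CC-continuous path, so every element of elh is
  joined to the identity.

  (2) Basic neighbourhoods are given by compact sets, so the discs of radius n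
  with tolerance 1/(n+1) suffice: an h in the closure is a locally uniform limit
  of compositions g_n o f with g_n in elh. By little Picard, f omits at most one
  value p, so every circle around p lies in the image of a compact disc, where
  g_n o f converges uniformly; by the maximum modulus principle the g_n are
  uniformly Cauchy on the enclosed discs and converge locally uniformly to an
  entire G with h = G o f. Their derivatives converge too, so deriv G 0 = 1,
  and by Hurwitz's theorem deriv G has no zeros.
*)

definition cc_nbhd :: "complex set \<Rightarrow> real \<Rightarrow> (complex \<Rightarrow> complex) \<Rightarrow> (complex \<Rightarrow> complex) set" where
  "cc_nbhd K e f = {g. \<forall>z\<in>K. dist (g z) (f z) < e}"

lemma cc_nbhd_mono: "K \<subseteq> K' \<Longrightarrow> e' \<le> e \<Longrightarrow> cc_nbhd K' e' f \<subseteq> cc_nbhd K e f"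
  unfolding cc_nbhd_def by fastforce

lemma self_in_cc_nbhd: "e > 0 \<Longrightarrow> f \<in> cc_nbhd K e f"
  unfolding cc_nbhd_def by simp

lemma cc_nbhd_half_subset: "g \<in> cc_nbhd K (e/2) f \<Longrightarrow> cc_nbhd K (e/2) g \<subseteq> cc_nbhd K e f"
  unfolding cc_nbhd_def
proof clarify
  fix h z
  assume "\<forall>z\<in>K. dist (g z) (f z) < e/2" "\<forall>z\<in>K. dist (h z) (g z) < e/2" "z \<in> K"
  then show "dist (h z) (f z) < e"
    using dist_triangle[of "h z" "f z" "g z"] by fastforce
qed

lemma istopology_tau_CC:
  "istopology (\<lambda>U. \<forall>f\<in>U. \<exists>K e. compact K \<and> e > 0 \<and> cc_nbhd K e f \<subseteq> U)"
  unfolding istopology_def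
proof (intro conjI allI impI ballI)
  fix S T f
  assume S: "\<forall>f\<in>S. \<exists>K e. compact K \<and> e > 0 \<and> cc_nbhd K e f \<subseteq> S"
    and T: "\<forall>f\<in>T. \<exists>K e. compact K \<and> e > 0 \<and> cc_nbhd K e f \<subseteq> T" and f: "f \<in> S \<inter> T"
  then obtain K1 e1 K2 e2 where K: "compact K1" "e1 > 0" "cc_nbhd K1 e1 f \<subseteq> S"
    "compact K2" "e2 > 0" "cc_nbhd K2 e2 f \<subseteq> T"
    by (meson IntD1 IntD2)
  have "cc_nbhd (K1 \<union> K2) (min e1 e2) f \<subseteq> S \<inter> T"
    using cc_nbhd_mono[of K1 "K1 \<union> K2" "min e1 e2" e1 f] cc_nbhd_mono[of K2 "K1 \<union> K2" "min e1 e2" e2 f] K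
    by auto
  then show "\<exists>K e. compact K \<and> e > 0 \<and> cc_nbhd K e f \<subseteq> S \<inter> T"
    using K by (intro exI[of _ "K1 \<union> K2"] exI[of _ "min e1 e2"]) auto
next
  fix KK f
  assume "\<forall>S\<in>KK. \<forall>f\<in>S. \<exists>K e. compact K \<and> e > 0 \<and> cc_nbhd K e f \<subseteq> S" and "f \<in> \<Union>KK"
  then show "\<exists>K e. compact K \<and> e > 0 \<and> cc_nbhd K e f \<subseteq> \<Union>KK"
    by (meson Union_iff Sup_upper order_trans)
qed

lemma openin_tau_CC:
  "openin tau_CC U \<longleftrightarrow> (\<forall>f\<in>U. \<exists>K e. compact K \<and> e > 0 \<and> cc_nbhd K e f \<subseteq> U)"
  using topology_inverse'[OF istopology_tau_CC] unfolding tau_CC_def cc_nbhd_def by simp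

lemma topspace_tau_CC [simp]: "topspace tau_CC = UNIV"
proof -
  have "openin tau_CC UNIV"
    unfolding openin_tau_CC by (auto intro!: exI[of _ "{}"] exI[of _ 1])
  then show ?thesis
    using openin_subset by blast
qed

lemma closedin_subtopology_tau_CCI:
  assumes "A \<subseteq> S"
    and adherent: "\<And>h. h \<in> S \<Longrightarrow> (\<And>K e. compact K \<Longrightarrow> e > 0 \<Longrightarrow> cc_nbhd K e h \<inter> A \<noteq> {}) \<Longrightarrow> h \<in> A"
  shows "closedin (subtopology tau_CC S) A"
proof -
  define T where "T = {g. \<exists>K e. compact K \<and> e > 0 \<and> cc_nbhd K e g \<inter> A = {}}"
  have "openin tau_CC T"
    unfolding openin_tau_CC
  proof
    fix g assume "g \<in> T"
    then obtain K e where K: "compact K" "e > 0" "cc_nbhd K e g \<inter> A = {}"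
      unfolding T_def by blast
    have "cc_nbhd K (e/2) g \<subseteq> T"
    proof
      fix g' assume "g' \<in> cc_nbhd K (e/2) g"
      then have "cc_nbhd K (e/2) g' \<inter> A = {}"
        using cc_nbhd_half_subset K(3) by blast
      then show "g' \<in> T"
        unfolding T_def using K(1,2) half_gt_zero by blast
    qed
    then show "\<exists>K e. compact K \<and> e > 0 \<and> cc_nbhd K e g \<subseteq> T"
      using K(1,2) half_gt_zero by blast
  qed
  moreover have "S - A = T \<inter> S"
  proof
    show "S - A \<subseteq> T \<inter> S"
      using adherent unfolding T_def by blast
    show "T \<inter> S \<subseteq> S - A"
      unfolding T_def using self_in_cc_nbhd by blast
  qed
  ultimately have "openin (subtopology tau_CC S) (S - A)"
    unfolding openin_subtopology by blast
  then show ?thesis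
    unfolding closedin_def using \<open>A \<subseteq> S\<close> by simp
qed

lemma continuous_map_tau_CC:
  fixes T :: "'a::metric_space set"
  assumes "compact T" and contH: "continuous_on (T \<times> UNIV) (\<lambda>(t, z). H t z)"
  shows "continuous_map (top_of_set T) tau_CC H"
proof -
  have near: "\<exists>d>0. \<forall>t\<in>T. dist t t0 < d \<longrightarrow> H t \<in> cc_nbhd K e (H t0)"
    if "t0 \<in> T" "compact K" "e > 0" for t0 K e
  proof -
    have "uniformly_continuous_on (T \<times> K) (\<lambda>(t, z). H t z)"
      using contH \<open>compact T\<close> \<open>compact K\<close>
      by (intro compact_uniformly_continuous compact_Times) (auto elim: continuous_on_subset)
    then obtain d where "d > 0" and d: "\<And>x x'. x \<in> T \<times> K \<Longrightarrow> x' \<in> T \<times> K \<Longrightarrow>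
        dist x' x < d \<Longrightarrow> dist ((\<lambda>(t, z). H t z) x') ((\<lambda>(t, z). H t z) x) < e"
      unfolding uniformly_continuous_on_def using \<open>e > 0\<close> by metis
    have "H t \<in> cc_nbhd K e (H t0)" if "t \<in> T" "dist t t0 < d" for t
      unfolding cc_nbhd_def
      using d[of "(t0, _)" "(t, _)"] \<open>t0 \<in> T\<close> that by (simp add: dist_Pair_Pair)
    then show ?thesis
      using \<open>d > 0\<close> by blast
  qed
  show ?thesis
    unfolding continuous_map_def topspace_tau_CC openin_euclidean_subtopology_iff
  proof (intro conjI allI impI ballI)
    fix U t0 assume "openin tau_CC U" and t0: "t0 \<in> {t \<in> topspace (top_of_set T). H t \<in> U}"
    then obtain K e where "compact K" "e > 0" "cc_nbhd K e (H t0) \<subseteq> U"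
      unfolding openin_tau_CC by auto
    then show "\<exists>d>0. \<forall>t\<in>T. dist t t0 < d \<longrightarrow> t \<in> {t \<in> topspace (top_of_set T). H t \<in> U}"
      using near[of t0 K e] t0 by auto
  qed auto
qed

lemma elhD:
  assumes "f \<in> elh"
  shows "f holomorphic_on UNIV" "deriv f z \<noteq> 0" "deriv f 0 = 1"
    "(f has_field_derivative deriv f z) (at z)"
  using assms unfolding elh_def by (auto intro: holomorphic_derivI)

lemma elh_nonconstant: "f \<in> elh \<Longrightarrow> \<not> f constant_on UNIV"
proof
  assume "f \<in> elh" "f constant_on UNIV"
  then obtain c where "f = (\<lambda>z. c)"
    unfolding constant_on_def by blast
  with elhD(3)[OF \<open>f \<in> elh\<close>] show False
    by simp
qed

lemma elh_rescale:
  assumes f: "f \<in> elh" and "c \<noteq> 0"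
  shows "(\<lambda>z. (f (c * z) - f 0) / c + c * f 0) \<in> elh"
proof -
  have "((\<lambda>z. f (c * z)) has_field_derivative deriv f (c * z) * c) (at z)" for z
    by (rule DERIV_chain2[OF elhD(4)[OF f] DERIV_cmult_Id])
  then have "((\<lambda>z. (f (c * z) - f 0) / c + c * f 0) has_field_derivative
      (deriv f (c * z) * c - 0) / c + 0) (at z)" for z
    by (rule DERIV_add[OF DERIV_cdivide[OF DERIV_diff[OF _ DERIV_const]] DERIV_const])
  then have der: "((\<lambda>z. (f (c * z) - f 0) / c + c * f 0) has_field_derivative deriv f (c * z)) (at z)" for z
    using \<open>c \<noteq> 0\<close> by simp
  then show ?thesis
    using DERIV_imp_deriv[OF der] elhD(2,3)[OF f]
    unfolding elh_def holomorphic_on_def field_differentiable_def by auto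
qed

lemma path_component_of_id_elh:
  assumes f: "f \<in> elh"
  shows "path_component_of (subtopology tau_CC elh) (\<lambda>z. z) f"
proof -
  define Q where "Q = (\<lambda>w. if w = 0 then deriv f 0 else (f w - f 0) / w)"
  have "Q holomorphic_on UNIV"
    using pole_lemma[OF elhD(1)[OF f], of 0] unfolding Q_def diff_zero by simp
  then have contQ: "continuous_on UNIV Q"
    by (rule holomorphic_on_imp_continuous_on)
  define H where "H t z = z * Q (of_real t * z) + of_real t * f 0" for t :: real and z
  have H_rescale: "H t = (\<lambda>z. (f (of_real t * z) - f 0) / of_real t + of_real t * f 0)"
    if "t \<noteq> 0" for t
    using that by (auto simp: fun_eq_iff H_def Q_def)
  have H0: "H 0 = (\<lambda>z. z)"
    using elhD(3)[OF f] by (simp add: fun_eq_iff H_def Q_def)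
  have H1: "H 1 = f"
    using H_rescale[of 1] by simp
  have "H t \<in> elh" for t
  proof (cases "t = 0")
    case True
    then show ?thesis
      using H0 by (simp add: elh_def)
  next
    case False
    then show ?thesis
      using elh_rescale[OF f, of "of_real t"] H_rescale[of t] by simp
  qed
  moreover have "continuous_on ({0..1} \<times> UNIV) (\<lambda>(t, z). H t z)"
    unfolding H_def case_prod_unfold
    by (intro continuous_intros continuous_on_compose2[OF contQ]) auto
  then have "continuous_map (top_of_set {0..1}) tau_CC H"
    by (rule continuous_map_tau_CC[OF compact_Icc])
  ultimately have "pathin (subtopology tau_CC elh) H"
    unfolding pathin_def continuous_map_in_subtopology by blast
  then show ?thesis
    unfolding path_component_of_def using H0 H1 by blast
qed

lemma path_connected_space_elh: "path_connected_space (subtopology tau_CC elh)"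
  unfolding path_connected_space_iff_path_component topspace_subtopology topspace_tau_CC
proof (intro ballI)
  fix f g assume "f \<in> UNIV \<inter> elh" "g \<in> UNIV \<inter> elh"
  then show "path_component_of (subtopology tau_CC elh) f g"
    by (meson IntD2 path_component_of_id_elh path_component_of_sym path_component_of_trans)
qed

lemma entire_omits_at_most_one_value:
  assumes "f holomorphic_on UNIV" and "\<not> f constant_on UNIV"
  obtains p where "\<And>w. w \<noteq> p \<Longrightarrow> w \<in> range f"
proof (rule ccontr)
  assume "\<not> thesis"
  then have omit: "\<exists>w. w \<noteq> p \<and> w \<notin> range f" for p
    using that by blast
  obtain a where "a \<notin> range f"
    using omit by blast
  moreover obtain b where "b \<noteq> a" "b \<notin> range f"
    using omit by blast
  ultimately obtain c where "f = (\<lambda>z. c)"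
    using little_Picard[OF assms(1), of b a] by blast
  with assms(2) show False
    by (simp add: constant_on_def)
qed

lemma compact_subset_image_cball:
  assumes "f holomorphic_on UNIV" and "\<not> f constant_on UNIV"
    and "compact C" and "C \<subseteq> range f"
  obtains r where "C \<subseteq> f ` cball 0 r"
proof -
  have open_image: "open (f ` ball 0 (real n))" for n
    by (rule open_mapping_thm[OF assms(1) open_UNIV connected_UNIV open_ball subset_UNIV assms(2)])
  have cover: "C \<subseteq> (\<Union>n\<in>UNIV. f ` ball 0 (real n))"
  proof
    fix w assume "w \<in> C"
    then obtain z where "w = f z"
      using \<open>C \<subseteq> range f\<close> by blast
    obtain n where "norm z < real n"
      using reals_Archimedean2 by blast
    then have "z \<in> ball 0 (real n)"
      by simp
    with \<open>w = f z\<close> show "w \<in> (\<Union>n\<in>UNIV. f ` ball 0 (real n))"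
      by blast
  qed
  obtain N where N: "N \<subseteq> UNIV" "finite N" "C \<subseteq> (\<Union>n\<in>N. f ` ball 0 (real n))"
    by (rule compactE_image[OF \<open>compact C\<close> open_image cover])
  define r where "r = real (Max (insert 0 N))"
  have "C \<subseteq> f ` cball 0 r"
  proof
    fix w assume "w \<in> C"
    then obtain n where "n \<in> N" "w \<in> f ` ball 0 (real n)"
      using N(3) by blast
    moreover have "ball 0 (real n) \<subseteq> cball 0 r"
      unfolding r_def using Max_ge[of "insert 0 N" n] N(2) \<open>n \<in> N\<close>
      by (intro order_trans[OF ball_subset_cball] subset_cball) simp
    ultimately show "w \<in> f ` cball 0 r"
      by blast
  qed
  then show ?thesis
    by (rule that)
qed

lemma uniformly_Cauchy_on_subset:
  "uniformly_Cauchy_on A g \<Longrightarrow> B \<subseteq> A \<Longrightarrow> uniformly_Cauchy_on B g"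
  unfolding uniformly_Cauchy_on_def by (meson subsetD)

lemma uniformly_Cauchy_on_image:
  "uniformly_Cauchy_on (f ` K) g \<longleftrightarrow> uniformly_Cauchy_on K (\<lambda>n. g n \<circ> f)"
  unfolding uniformly_Cauchy_on_def by simp

lemma uniformly_Cauchy_on_cball_if_sphere:
  assumes holg: "\<And>n. g n holomorphic_on UNIV"
    and cauchy: "uniformly_Cauchy_on (sphere p R) g"
  shows "uniformly_Cauchy_on (cball p R) g"
proof (rule uniformly_Cauchy_onI)
  fix e :: real assume "e > 0"
  then obtain M where M: "\<And>w m n. w \<in> sphere p R \<Longrightarrow> m \<ge> M \<Longrightarrow> n \<ge> M \<Longrightarrow> dist (g m w) (g n w) < e/2"
    using cauchy half_gt_zero unfolding uniformly_Cauchy_on_def by meson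
  have "norm (g m z - g n z) \<le> e/2" if "z \<in> cball p R" "m \<ge> M" "n \<ge> M" for z m n
  proof (rule maximum_modulus_frontier[where S = "cball p R" and f = "\<lambda>z. g m z - g n z"])
    show "(\<lambda>z. g m z - g n z) holomorphic_on interior (cball p R)"
      using holg by (blast intro: holomorphic_intros holomorphic_on_subset)
    show "continuous_on (closure (cball p R)) (\<lambda>z. g m z - g n z)"
      using holg by (blast intro: continuous_intros holomorphic_on_imp_continuous_on holomorphic_on_subset)
    show "norm (g m w - g n w) \<le> e/2" if "w \<in> frontier (cball p R)" for w
      using M[of w m n] that \<open>m \<ge> M\<close> \<open>n \<ge> M\<close> by (simp add: dist_norm)
  qed (use that in auto)
  then show "\<exists>M. \<forall>z\<in>cball p R. \<forall>m\<ge>M. \<forall>n\<ge>M. dist (g m z) (g n z) < e"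
    using \<open>e > 0\<close> by (force simp: dist_norm)
qed

lemma uniform_limit_deriv_entire:
  assumes holg: "\<And>n. g n holomorphic_on UNIV" and holG: "G holomorphic_on UNIV"
    and lim: "\<And>K. compact K \<Longrightarrow> uniform_limit K g G sequentially"
    and "compact K"
  shows "uniform_limit K (\<lambda>n. deriv (g n)) (deriv G) sequentially"
proof (rule uniform_limitI)
  fix e :: real assume "e > 0"
  obtain r where r: "\<And>z. z \<in> K \<Longrightarrow> norm z \<le> r"
    using compact_imp_bounded[OF \<open>compact K\<close>] unfolding bounded_iff by blast
  have "\<forall>\<^sub>F n in sequentially. \<forall>w\<in>cball 0 (r + 1). dist (g n w) (G w) < e/2"
    by (rule uniform_limitD[OF lim[OF compact_cball]]) (use \<open>e > 0\<close> in simp)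
  then show "\<forall>\<^sub>F n in sequentially. \<forall>z\<in>K. dist (deriv (g n) z) (deriv G z) < e"
  proof eventually_elim
    case (elim n)
    show ?case
    proof
      fix z assume "z \<in> K"
      have ball_sub: "cball z 1 \<subseteq> cball 0 (r + 1)"
      proof
        fix w assume "w \<in> cball z 1"
        then have "norm (w - z) \<le> 1"
          by (simp add: dist_norm norm_minus_commute)
        moreover have "norm w \<le> norm z + norm (w - z)"
          using norm_triangle_ineq[of z "w - z"] by simp
        ultimately show "w \<in> cball 0 (r + 1)"
          using r[OF \<open>z \<in> K\<close>] by simp
      qed
      have "norm ((deriv ^^ 1) (\<lambda>w. g n w - G w) z) \<le> fact 1 * (e/2) / 1 ^ 1"
      proof (rule Cauchy_inequality)
        show "(\<lambda>w. g n w - G w) holomorphic_on ball z 1"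
          using holg holG by (blast intro: holomorphic_intros holomorphic_on_subset)
        show "continuous_on (cball z 1) (\<lambda>w. g n w - G w)"
          using holg holG by (blast intro: continuous_intros holomorphic_on_imp_continuous_on holomorphic_on_subset)
        show "norm (g n w - G w) \<le> e/2" if "norm (z - w) = 1" for w
        proof -
          have "w \<in> cball z 1"
            using that by (simp add: dist_norm)
          then have "w \<in> cball 0 (r + 1)"
            using ball_sub by blast
          then show ?thesis
            using elim by (auto simp: dist_norm intro: less_imp_le)
        qed
      qed simp
      moreover have "deriv (\<lambda>w. g n w - G w) z = deriv (g n) z - deriv G z"
        using holg holG by (intro deriv_diff) (auto intro: holomorphic_on_imp_differentiable_at)
      ultimately show "dist (deriv (g n) z) (deriv G z) < e"
        using \<open>e > 0\<close> by (simp add: dist_norm)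
    qed
  qed
qed

lemma entire_limit_of_compositions:
  assumes holf: "f holomorphic_on UNIV" and nonconst: "\<not> f constant_on UNIV"
    and holg: "\<And>n. g n holomorphic_on UNIV"
    and lim: "\<And>K. compact K \<Longrightarrow> uniform_limit K (\<lambda>n. g n \<circ> f) h sequentially"
  obtains G where "G holomorphic_on UNIV" "\<And>K. compact K \<Longrightarrow> uniform_limit K g G sequentially"
    "h = G \<circ> f"
proof -
  obtain p where p: "\<And>w. w \<noteq> p \<Longrightarrow> w \<in> range f"
    using entire_omits_at_most_one_value[OF holf nonconst] by blast
  have cauchy_cball: "uniformly_Cauchy_on (cball p R) g" if "R > 0" for R
  proof -
    have "sphere p R \<subseteq> range f"
      using p \<open>R > 0\<close> by auto
    then obtain r where r: "sphere p R \<subseteq> f ` cball 0 r"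
      using compact_subset_image_cball[OF holf nonconst compact_sphere] by blast
    have "uniformly_Cauchy_on (cball 0 r) (\<lambda>n. g n \<circ> f)"
      by (rule uniformly_convergent_Cauchy[OF uniformly_convergentI[OF lim[OF compact_cball]]])
    then have "uniformly_Cauchy_on (sphere p R) g"
      using r uniformly_Cauchy_on_subset uniformly_Cauchy_on_image by metis
    then show ?thesis
      by (rule uniformly_Cauchy_on_cball_if_sphere[OF holg])
  qed
  define G where "G z = lim (\<lambda>n. g n z)" for z
  have limG: "uniform_limit K g G sequentially" if "compact K" for K
  proof -
    obtain R where "R > 0" "K \<subseteq> ball p R"
      using bounded_subset_ballD[OF compact_imp_bounded[OF \<open>compact K\<close>]] by blast
    then have "uniformly_Cauchy_on K g"
      using cauchy_cball uniformly_Cauchy_on_subset ball_subset_cball by (metis subset_trans)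
    then have "uniformly_convergent_on K g"
      by (rule Cauchy_uniformly_convergent)
    then show ?thesis
      unfolding G_def uniformly_convergent_uniform_limit_iff .
  qed
  have "G holomorphic_on UNIV"
  proof (rule holomorphic_uniform_sequence[OF open_UNIV])
    show "g n holomorphic_on UNIV" for n
      by (rule holg)
    show "\<exists>d>0. cball z d \<subseteq> UNIV \<and> uniform_limit (cball z d) g G sequentially" for z
      using limG[OF compact_cball, of z 1] zero_less_one by blast
  qed
  moreover have "h = G \<circ> f"
  proof
    fix z
    have "(\<lambda>n. (g n \<circ> f) z) \<longlonglongrightarrow> h z"
      by (rule tendsto_uniform_limitI[OF lim[OF compact_sing]]) simp
    moreover have "(\<lambda>n. g n (f z)) \<longlonglongrightarrow> G (f z)"
      by (rule tendsto_uniform_limitI[OF limG[OF compact_sing]]) simp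
    ultimately show "h z = (G \<circ> f) z"
      using LIMSEQ_unique by fastforce
  qed
  ultimately show ?thesis
    using that limG by blast
qed

lemma elh_limit_of_compositions:
  assumes f: "f \<in> elh" and h: "h \<in> elh" and g: "\<And>n. g n \<in> elh"
    and lim: "\<And>K. compact K \<Longrightarrow> uniform_limit K (\<lambda>n. g n \<circ> f) h sequentially"
  shows "\<exists>G\<in>elh. h = G \<circ> f"
proof -
  obtain G where holG: "G holomorphic_on UNIV"
    and limG: "\<And>K. compact K \<Longrightarrow> uniform_limit K g G sequentially" and hGf: "h = G \<circ> f"
    using entire_limit_of_compositions[OF elhD(1)[OF f] elh_nonconstant[OF f] elhD(1)[OF g] lim] by blast
  have limG': "uniform_limit K (\<lambda>n. deriv (g n)) (deriv G) sequentially" if "compact K" for K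
    using uniform_limit_deriv_entire[OF elhD(1)[OF g] holG limG that] .
  have "(\<lambda>n. deriv (g n) 0) \<longlonglongrightarrow> deriv G 0"
    by (rule tendsto_uniform_limitI[OF limG'[OF compact_sing]]) simp
  then have dG0: "deriv G 0 = 1"
    by (simp add: elhD(3)[OF g] LIMSEQ_const_iff)
  have "deriv G z \<noteq> 0" for z
  proof (cases "deriv G constant_on UNIV")
    case True
    then have "deriv G z = deriv G 0"
      unfolding constant_on_def by auto
    with dG0 show ?thesis
      by simp
  next
    case False
    show ?thesis
    proof (rule Hurwitz_no_zeros[of UNIV "\<lambda>n. deriv (g n)" "deriv G"])
      show "deriv (g n) holomorphic_on UNIV" for n
        by (rule holomorphic_deriv[OF elhD(1)[OF g] open_UNIV])
      show "deriv G holomorphic_on UNIV"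
        by (rule holomorphic_deriv[OF holG open_UNIV])
      show "deriv (g n) w \<noteq> 0" for n w
        by (rule elhD(2)[OF g])
    qed (use False limG' in auto)
  qed
  with holG dG0 have "G \<in> elh"
    unfolding elh_def by blast
  with hGf show ?thesis
    by blast
qed

lemma uniform_limit_if_cball_approx:
  fixes \<phi> :: "nat \<Rightarrow> 'a::real_normed_vector \<Rightarrow> 'b::metric_space"
  assumes approx: "\<And>n z. z \<in> cball 0 (real n) \<Longrightarrow> dist (\<phi> n z) (h z) < inverse (real (Suc n))"
    and "compact K"
  shows "uniform_limit K \<phi> h sequentially"
proof (rule uniform_limitI)
  fix e :: real assume "e > 0"
  obtain r where r: "\<And>z. z \<in> K \<Longrightarrow> norm z \<le> r"
    using compact_imp_bounded[OF \<open>compact K\<close>] unfolding bounded_iff by blast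
  obtain N :: nat where "r \<le> real N"
    using real_arch_simple by blast
  have "\<forall>\<^sub>F n in sequentially. r \<le> real n"
    using eventually_ge_at_top[of N]
  proof (rule eventually_mono)
    fix n assume "N \<le> n"
    then show "r \<le> real n"
      using \<open>r \<le> real N\<close> of_nat_le_iff order_trans by meson
  qed
  moreover have "\<forall>\<^sub>F n in sequentially. inverse (real (Suc n)) < e"
    by (rule order_tendstoD(2)[OF LIMSEQ_inverse_real_of_nat \<open>e > 0\<close>])
  ultimately show "\<forall>\<^sub>F n in sequentially. \<forall>z\<in>K. dist (\<phi> n z) (h z) < e"
  proof eventually_elim
    case (elim n)
    show ?case
    proof
      fix z assume "z \<in> K"
      then have "z \<in> cball 0 (real n)"
        using r elim(1) by fastforce
      then show "dist (\<phi> n z) (h z) < e"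
        using approx elim(2) by (meson order.strict_trans)
    qed
  qed
qed

lemma closedin_R_elh:
  assumes f: "f \<in> elh"
  shows "closedin (subtopology tau_CC elh) (R_elh f \<inter> elh)"
proof (rule closedin_subtopology_tau_CCI)
  show "R_elh f \<inter> elh \<subseteq> elh"
    by (rule Int_lower2)
  fix h assume h: "h \<in> elh"
    and adherent: "\<And>K e. compact K \<Longrightarrow> e > 0 \<Longrightarrow> cc_nbhd K e h \<inter> (R_elh f \<inter> elh) \<noteq> {}"
  define N where "N n = cc_nbhd (cball 0 (real n)) (inverse (real (Suc n))) h" for n
  have "\<exists>g. g \<in> elh \<and> g \<circ> f \<in> N n" for n
  proof -
    have "N n \<inter> (R_elh f \<inter> elh) \<noteq> {}"
      unfolding N_def by (rule adherent[OF compact_cball]) simp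
    then obtain \<phi> where "\<phi> \<in> N n" "\<phi> \<in> R_elh f"
      by blast
    then show ?thesis
      unfolding R_elh_def by blast
  qed
  then obtain g where g: "\<And>n. g n \<in> elh" and approx: "\<And>n. g n \<circ> f \<in> N n"
    using choice[of "\<lambda>n g. g \<in> elh \<and> g \<circ> f \<in> N n"] by blast
  have "uniform_limit K (\<lambda>n. g n \<circ> f) h sequentially" if "compact K" for K
  proof (rule uniform_limit_if_cball_approx[OF _ that])
    show "dist ((g n \<circ> f) z) (h z) < inverse (real (Suc n))" if "z \<in> cball 0 (real n)" for n z
      using approx[of n] that unfolding N_def cc_nbhd_def by blast
  qed
  from elh_limit_of_compositions[OF f h g this] obtain G where "G \<in> elh" "h = G \<circ> f"
    by blast
  with h show "h \<in> R_elh f \<inter> elh"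
    unfolding R_elh_def by blast
qed

theorem proposition3p16:
  shows "path_connected_space (subtopology tau_CC elh) \<and>
    (\<forall>f\<in>elh. closedin (subtopology tau_CC elh) (R_elh f \<inter> elh))"
  using path_connected_space_elh closedin_R_elh by blast

end
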